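(* Let $\mathbb{K}$ be a field of characteristic zero and let $f=\frac{b}{c\,d^\lambda}\in\mathbb{K}(x,y,z)$, where $\lambda$ is a positive integer, $b,d\in\mathbb{K}[x,y,z]$, $c\in\mathbb{K}[x,y]$, $d$ is irreducible, $b,c,d$ are primitive as polynomials in $y,z$, and $\deg_z(b)<\deg_z(d)$. Suppose there is a positive integer $m$ with $\sigma_x^m(d)=\sigma_y^n\sigma_z^k(d)$ for some $n,k\in\mathbb{Z}$; let $m$ be the smallest such positive integer and fix integers $n,k$ with $\sigma_x^m(d)=\sigma_y^n\sigma_z^k(d)$. If one of the following holds: (i) there exist $n_1,n_2,k_1,k_2\in\mathbb{Z}$ with $n_1,n_2>0$ such that $\sigma_y^{n_1}(d)=\sigma_z^{k_1}(d)$ and $\sigma_x^{n_2}(c)=\sigma_y^{k_2}(c)$; (ii) there exists a positive integer $t$ such that $\sigma_x^{tm}(c)=\sigma_y^{tn}(c)$; then $f$ has a telescoper.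
   Context: $\sigma_x,\sigma_y,\sigma_z$ are the shift automorphisms of $\mathbb{K}(x,y,z)$: $\sigma_x(f)=f(x+1,y,z)$, $\sigma_y(f)=f(x,y+1,z)$, $\sigma_z(f)=f(x,y,z+1)$. A rational function $g\in\mathbb{K}(x,y,z)$ is $(\sigma_y,\sigma_z)$-summable if $g=\sigma_y(u)-u+\sigma_z(v)-v$ for some $u,v\in\mathbb{K}(x,y,z)$. A telescoper for $f$ is a nonzero operator $L=\sum_i \ell_i S_x^i$ with $\ell_i\in\mathbb{K}(x)$ such that $L(f)=\sum_i\ell_i f(x+i,y,z)$ is $(\sigma_y,\sigma_z)$-summable. *)

theory Defs
  imports "HOL-Computational_Algebra.Polynomial" "HOL-Computational_Algebra.Fraction_Field"
begin

text \<open>Trivariate polynomials K[x,y,z] are represented as 'a poly poly poly: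
  a polynomial in z whose coefficients are polynomials in y whose coefficients
  are polynomials in x.\<close>

type_synonym 'a tpoly = "'a poly poly poly"
type_synonym 'a trat = "'a tpoly fract"

definition shx :: "int \<Rightarrow> 'a::field_char_0 tpoly \<Rightarrow> 'a tpoly" where
  "shx a p = map_poly (map_poly (\<lambda>r. pcompose r [:of_int a, 1:])) p"

definition shy :: "int \<Rightarrow> 'a::field_char_0 tpoly \<Rightarrow> 'a tpoly" where
  "shy a p = map_poly (\<lambda>q. pcompose q [:of_int a, 1:]) p"

definition shz :: "int \<Rightarrow> 'a::field_char_0 tpoly \<Rightarrow> 'a tpoly" where
  "shz a p = pcompose p [:of_int a, 1:]"

definition embx :: "'a::field_char_0 poly \<Rightarrow> 'a tpoly" where
  "embx p = [:[:p:]:]"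

definition embxy :: "'a::field_char_0 poly poly \<Rightarrow> 'a tpoly" where
  "embxy p = [:p:]"

definition fshift :: "('a::field_char_0 tpoly \<Rightarrow> 'a tpoly) \<Rightarrow> 'a trat \<Rightarrow> 'a trat" where
  "fshift s q = (THE r. \<forall>a b. b \<noteq> 0 \<longrightarrow> q = Fract a b \<longrightarrow> r = Fract (s a) (s b))"

definition sigma_x :: "'a::field_char_0 trat \<Rightarrow> 'a trat" where
  "sigma_x = fshift (shx 1)"
definition sigma_y :: "'a::field_char_0 trat \<Rightarrow> 'a trat" where
  "sigma_y = fshift (shy 1)"
definition sigma_z :: "'a::field_char_0 trat \<Rightarrow> 'a trat" where
  "sigma_z = fshift (shz 1)"

definition Kx :: "'a::field_char_0 trat set" where
  "Kx = {Fract (embx p) (embx q) | p q. q \<noteq> 0}"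

definition yz_summable :: "'a::field_char_0 trat \<Rightarrow> bool" where
  "yz_summable g \<longleftrightarrow> (\<exists>u v. g = sigma_y u - u + sigma_z v - v)"

definition has_telescoper :: "'a::field_char_0 trat \<Rightarrow> bool" where
  "has_telescoper f \<longleftrightarrow> (\<exists>(N::nat) (l::nat \<Rightarrow> 'a trat).
      (\<forall>i\<le>N. l i \<in> Kx) \<and> (\<exists>i\<le>N. l i \<noteq> 0) \<and>
      yz_summable (\<Sum>i\<le>N. l i * (sigma_x ^^ i) f))"

definition prim_yz :: "'a::field_char_0 tpoly \<Rightarrow> bool" where
  "prim_yz p \<longleftrightarrow> (\<forall>r::'a poly. (\<forall>i j. r dvd coeff (coeff p i) j) \<longrightarrow> is_unit r)"

end

theory Submission
  imports Defs
begin

text \<open>The hypotheses yield a common period of \<open>c\<close> and \<open>d\<close>: integers \<open>M > 0\<close>, \<open>P\<close>, \<open>Q\<close>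
  such that the shift \<open>(x, y, z) \<mapsto> (x + M, y + P, z + Q)\<close> fixes \<open>D = c d\<^sup>\<lambda>\<close>.  Hence
  \<open>\<sigma>\<^sub>x\<^bsup>jM\<^esup> f = \<sigma>\<^sub>y\<^bsup>-jP\<^esup> \<sigma>\<^sub>z\<^bsup>-jQ\<^esup> (b\<^sub>j / D)\<close> with \<open>b\<^sub>j\<close> the corresponding shift of \<open>b\<close>, which
  differs from \<open>b\<^sub>j / D\<close> by a summable function.  Shifts do not raise the degrees in \<open>y\<close>
  and \<open>z\<close>, so the \<open>b\<^sub>j\<close> lie in a free \<open>K[x]\<close>-module of finite rank, and finitely many of
  them satisfy a nontrivial relation \<open>\<Sum> a\<^sub>j b\<^sub>j = 0\<close> with \<open>a\<^sub>j \<in> K[x]\<close>; then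
  \<open>\<Sum> a\<^sub>j S\<^sub>x\<^bsup>jM\<^esup>\<close> is a telescoper.\<close>

definition is_ring_hom :: "('a::comm_ring_1 \<Rightarrow> 'b::comm_ring_1) \<Rightarrow> bool" where
  "is_ring_hom F \<longleftrightarrow>
     (\<forall>a b. F (a + b) = F a + F b) \<and> (\<forall>a b. F (a * b) = F a * F b) \<and> F 1 = 1"

lemma ring_hom_add: "is_ring_hom F \<Longrightarrow> F (a + b) = F a + F b"
  by (simp add: is_ring_hom_def)

lemma ring_hom_mult: "is_ring_hom F \<Longrightarrow> F (a * b) = F a * F b"
  by (simp add: is_ring_hom_def)

lemma ring_hom_one: "is_ring_hom F \<Longrightarrow> F 1 = 1"
  by (simp add: is_ring_hom_def)

lemma ring_hom_zero: "is_ring_hom F \<Longrightarrow> F 0 = 0"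
  using ring_hom_add[of F 0 0] by simp

lemma ring_hom_uminus: "is_ring_hom F \<Longrightarrow> F (- a) = - F a"
  using ring_hom_add[of F a "- a"] by (simp add: ring_hom_zero add_eq_0_iff2)

lemma ring_hom_diff: "is_ring_hom F \<Longrightarrow> F (a - b) = F a - F b"
  using ring_hom_add[of F a "- b"] by (simp add: ring_hom_uminus)

lemma ring_hom_sum: "is_ring_hom F \<Longrightarrow> F (sum g A) = (\<Sum>x\<in>A. F (g x))"
  by (induct A rule: infinite_finite_induct) (auto simp: ring_hom_zero ring_hom_add)

lemma ring_hom_power: "is_ring_hom F \<Longrightarrow> F (a ^ n) = F a ^ n"
  by (induct n) (auto simp: ring_hom_one ring_hom_mult)

lemma ring_hom_of_int: "is_ring_hom F \<Longrightarrow> F (of_int n) = of_int n"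
proof -
  assume F: "is_ring_hom F"
  have "F (of_nat k) = of_nat k" for k
    by (induct k) (simp_all add: F ring_hom_zero ring_hom_one ring_hom_add)
  then show ?thesis
    by (cases n rule: int_cases2) (simp_all add: F ring_hom_uminus)
qed

lemma ring_hom_comp: "is_ring_hom F \<Longrightarrow> is_ring_hom G \<Longrightarrow> is_ring_hom (F \<circ> G)"
  by (simp add: is_ring_hom_def)

lemma ring_hom_map_poly:
  assumes F: "is_ring_hom F"
  shows "is_ring_hom (map_poly F)"
  unfolding is_ring_hom_def
proof (intro conjI allI)
  fix a b
  show "map_poly F (a + b) = map_poly F a + map_poly F b"
    by (rule poly_eqI) (simp add: coeff_map_poly F ring_hom_zero ring_hom_add)
  show "map_poly F (a * b) = map_poly F a * map_poly F b"
    by (rule poly_eqI)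
      (simp add: coeff_map_poly coeff_mult F ring_hom_zero ring_hom_sum ring_hom_mult)
qed (simp add: F ring_hom_one)

lemma ring_hom_pcompose: "is_ring_hom (\<lambda>p. pcompose p q)"
  by (simp add: is_ring_hom_def pcompose_add pcompose_mult pcompose_1)

lemma map_poly_pcompose:
  assumes F: "is_ring_hom F"
  shows "map_poly F (pcompose p q) = pcompose (map_poly F p) (map_poly F q)"
proof (induct p)
  case (pCons a p)
  have "map_poly F [:a:] = [:F a:]"
    by (simp add: map_poly_pCons F ring_hom_zero)
  with pCons show ?case
    using ring_hom_map_poly[OF F]
    by (simp add: pcompose_pCons map_poly_pCons F ring_hom_zero ring_hom_add ring_hom_mult)
qed simp

lemma map_poly_linear_shift:
  "is_ring_hom F \<Longrightarrow> map_poly F [:of_int r, 1:] = [:of_int r, 1:]"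
  by (simp add: map_poly_pCons ring_hom_zero ring_hom_one ring_hom_of_int)

lemma pcompose_linear_shift:
  "pcompose [:of_int a, 1:] [:of_int b, 1:] = ([:of_int (a + b), 1:] :: 'a::comm_ring_1 poly)"
  by (simp add: pcompose_pCons algebra_simps)

lemma pcompose_linear_shift_comp:
  "(\<lambda>p. pcompose p [:of_int a, 1:]) \<circ> (\<lambda>p. pcompose p [:of_int b, 1:])
     = (\<lambda>p::'a::comm_ring_1 poly. pcompose p [:of_int (a + b), 1:])"
  by (auto simp: fun_eq_iff pcompose_assoc[symmetric] pcompose_linear_shift add.commute)

lemma ring_hom_shx: "is_ring_hom (shx a)"
  unfolding shx_def[abs_def] by (intro ring_hom_map_poly ring_hom_pcompose)

lemma ring_hom_shy: "is_ring_hom (shy a)"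
  unfolding shy_def[abs_def] by (rule ring_hom_map_poly ring_hom_pcompose)+

lemma ring_hom_shz: "is_ring_hom (shz a)"
  unfolding shz_def[abs_def] by (rule ring_hom_pcompose)

lemma shx_0 [simp]: "shx 0 p = p"
  by (simp add: shx_def map_poly_idI)

lemma shy_0 [simp]: "shy 0 p = p"
  by (simp add: shy_def)

lemma shz_0 [simp]: "shz 0 p = p"
  by (simp add: shz_def)

lemma shx_shx: "shx a (shx b p) = shx (a + b) p"
  by (simp add: shx_def map_poly_map_poly o_def pcompose_linear_shift_comp[unfolded fun_eq_iff o_def])

lemma shy_shy: "shy a (shy b p) = shy (a + b) p"
  by (simp add: shy_def map_poly_map_poly pcompose_linear_shift_comp)

lemma shz_shz: "shz a (shz b p) = shz (a + b) p"
  by (simp add: shz_def pcompose_assoc[symmetric] pcompose_linear_shift add.commute)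

lemma shy_shx: "shy b (shx a p) = shx a (shy b p)"
  by (simp add: shx_def shy_def map_poly_map_poly o_def
      map_poly_pcompose[OF ring_hom_pcompose] map_poly_linear_shift[OF ring_hom_pcompose])

lemma shz_shx: "shz c (shx a p) = shx a (shz c p)"
  using map_poly_pcompose[OF ring_hom_map_poly[OF ring_hom_pcompose], of _ p "[:of_int c, 1:]"]
  by (simp add: shx_def shz_def map_poly_linear_shift[OF ring_hom_map_poly[OF ring_hom_pcompose]])

lemma shz_shy: "shz c (shy b p) = shy b (shz c p)"
  using map_poly_pcompose[OF ring_hom_pcompose, of _ p "[:of_int c, 1:]"]
  by (simp add: shy_def shz_def map_poly_linear_shift[OF ring_hom_pcompose])

definition shxyz :: "int \<Rightarrow> int \<Rightarrow> int \<Rightarrow> 'a::field_char_0 tpoly \<Rightarrow> 'a tpoly" where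
  "shxyz a b c X = shx a (shy b (shz c X))"

lemma shxyz_shxyz [simp]:
  "shxyz a b c (shxyz a' b' c' X) = shxyz (a + a') (b + b') (c + c') X"
  by (simp add: shxyz_def shx_shx shy_shy shz_shz shy_shx shz_shx shz_shy)

lemma shxyz_axes: "shxyz a 0 0 = shx a" "shxyz 0 b 0 = shy b" "shxyz 0 0 c = shz c"
  by (simp_all add: fun_eq_iff shxyz_def)

lemma shxyz_0 [simp]: "shxyz 0 0 0 X = X"
  by (simp add: shxyz_def)

lemma ring_hom_shxyz: "is_ring_hom (shxyz a b c)"
proof -
  have "shxyz a b c = shx a \<circ> (shy b \<circ> shz c)"
    by (auto simp: shxyz_def)
  then show ?thesis
    by (metis ring_hom_comp ring_hom_shx ring_hom_shy ring_hom_shz)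
qed

lemma shxyz_inverse: "shxyz (- a) (- b) (- c) (shxyz a b c X) = X"
  by simp

lemma shxyz_eq_0_iff [simp]: "shxyz a b c X = 0 \<longleftrightarrow> X = 0"
  using shxyz_inverse[of a b c X] ring_hom_zero[OF ring_hom_shxyz] by metis

definition shift_invariant :: "int \<Rightarrow> int \<Rightarrow> int \<Rightarrow> 'a::field_char_0 tpoly \<Rightarrow> bool" where
  "shift_invariant a b c X \<longleftrightarrow> shxyz a b c X = X"

lemma shift_invariant_of_eq:
  "shxyz a b c X = shxyz a' b' c' X \<Longrightarrow> shift_invariant (a - a') (b - b') (c - c') X"
  unfolding shift_invariant_def
  by (drule arg_cong[where f = "shxyz (- a') (- b') (- c')"]) simp

lemma shift_invariant_add:
  "shift_invariant a b c X \<Longrightarrow> shift_invariant a' b' c' X \<Longrightarrow>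
     shift_invariant (a + a') (b + b') (c + c') X"
  unfolding shift_invariant_def by (metis shxyz_shxyz)

lemma shift_invariant_int_mult:
  assumes "shift_invariant a b c X"
  shows "shift_invariant (j * a) (j * b) (j * c) X"
proof -
  have nat: "shift_invariant (int i * a) (int i * b) (int i * c) X" for i
  proof (induct i)
    case (Suc i)
    show ?case
      using shift_invariant_add[OF assms Suc] by (simp add: algebra_simps)
  qed (simp add: shift_invariant_def)
  have "shift_invariant (- (int i * a)) (- (int i * b)) (- (int i * c)) X" for i
    using nat[of i] unfolding shift_invariant_def by (metis shxyz_inverse)
  with nat show ?thesis
    by (cases j rule: int_cases2) auto
qed

lemma shift_invariant_mult:
  "shift_invariant a b c X \<Longrightarrow> shift_invariant a b c Y \<Longrightarrow> shift_invariant a b c (X * Y)"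
  unfolding shift_invariant_def by (simp add: ring_hom_mult[OF ring_hom_shxyz])

lemma shift_invariant_power:
  "shift_invariant a b c X \<Longrightarrow> shift_invariant a b c (X ^ n)"
  unfolding shift_invariant_def by (simp add: ring_hom_power[OF ring_hom_shxyz])

lemma shift_invariant_embxy: "shift_invariant 0 0 c (embxy q)"
  by (simp add: shift_invariant_def shxyz_def embxy_def shz_def)

lemma shxyz_embx: "shxyz 0 b c (embx q) = embx q"
  by (simp add: shxyz_def embx_def shy_def shz_def map_poly_pCons)

lemma fshift_Fract:
  fixes s :: "'a::field_char_0 tpoly \<Rightarrow> 'a tpoly"
  assumes s: "is_ring_hom s" and inj: "\<And>X. s X = 0 \<Longrightarrow> X = 0" and "b \<noteq> 0"
  shows "fshift s (Fract a b) = Fract (s a) (s b)"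
  unfolding fshift_def
proof (rule the_equality)
  show "\<forall>a' b'. b' \<noteq> 0 \<longrightarrow> Fract a b = Fract a' b' \<longrightarrow> Fract (s a) (s b) = Fract (s a') (s b')"
  proof (intro allI impI)
    fix a' b' assume "b' \<noteq> 0" and "Fract a b = Fract a' b'"
    with \<open>b \<noteq> 0\<close> have "s a * s b' = s a' * s b" and "s b \<noteq> 0" "s b' \<noteq> 0"
      using inj by (auto simp: eq_fract simp flip: ring_hom_mult[OF s])
    then show "Fract (s a) (s b) = Fract (s a') (s b')"
      by (simp add: eq_fract)
  qed
qed (use \<open>b \<noteq> 0\<close> in blast)

definition sigma :: "int \<Rightarrow> int \<Rightarrow> int \<Rightarrow> 'a::field_char_0 trat \<Rightarrow> 'a trat" where
  "sigma a b c = fshift (shxyz a b c)"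

lemma sigma_Fract: "Y \<noteq> 0 \<Longrightarrow> sigma a b c (Fract X Y) = Fract (shxyz a b c X) (shxyz a b c Y)"
  unfolding sigma_def by (rule fshift_Fract[OF ring_hom_shxyz]) simp_all

lemma ring_hom_sigma: "is_ring_hom (sigma a b c)"
  unfolding is_ring_hom_def
proof (intro conjI allI)
  fix g h :: "'a trat"
  show "sigma a b c (g + h) = sigma a b c g + sigma a b c h"
    by (cases g; cases h)
      (simp add: sigma_Fract ring_hom_add[OF ring_hom_shxyz] ring_hom_mult[OF ring_hom_shxyz])
  show "sigma a b c (g * h) = sigma a b c g * sigma a b c h"
    by (cases g; cases h) (simp add: sigma_Fract ring_hom_mult[OF ring_hom_shxyz])
qed (simp add: One_fract_def sigma_Fract ring_hom_one[OF ring_hom_shxyz])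

lemma sigma_sigma [simp]: "sigma a b c (sigma a' b' c' g) = sigma (a + a') (b + b') (c + c') g"
  by (cases g) (simp add: sigma_Fract)

lemma sigma_0 [simp]: "sigma 0 0 0 g = g"
  by (cases g) (simp add: sigma_Fract)

lemma sigma_xyz: "sigma_x = sigma 1 0 0" "sigma_y = sigma 0 1 0" "sigma_z = sigma 0 0 1"
  by (simp_all add: sigma_x_def sigma_y_def sigma_z_def sigma_def shxyz_axes)

lemma sigma_x_pow: "(sigma_x ^^ i) g = sigma (int i) 0 0 g"
  by (induct i) (simp_all add: sigma_xyz add.commute)

lemma yz_summable_0: "yz_summable 0"
  unfolding yz_summable_def
  by (intro exI[of _ 0]) (simp add: sigma_xyz ring_hom_zero[OF ring_hom_sigma])

lemma yz_summable_add:
  assumes "yz_summable g" "yz_summable h"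
  shows "yz_summable (g + h)"
proof -
  from assms obtain u v u' v' where
    "g = sigma_y u - u + sigma_z v - v" "h = sigma_y u' - u' + sigma_z v' - v'"
    unfolding yz_summable_def by blast
  then have "g + h = sigma_y (u + u') - (u + u') + sigma_z (v + v') - (v + v')"
    by (simp add: sigma_xyz ring_hom_add[OF ring_hom_sigma])
  then show ?thesis
    unfolding yz_summable_def by blast
qed

lemma yz_summable_diff:
  assumes "yz_summable g" "yz_summable h"
  shows "yz_summable (g - h)"
proof -
  from assms obtain u v u' v' where
    "g = sigma_y u - u + sigma_z v - v" "h = sigma_y u' - u' + sigma_z v' - v'"
    unfolding yz_summable_def by blast
  then have "g - h = sigma_y (u - u') - (u - u') + sigma_z (v - v') - (v - v')"
    by (simp add: sigma_xyz ring_hom_diff[OF ring_hom_sigma])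
  then show ?thesis
    unfolding yz_summable_def by blast
qed

lemma yz_summable_sum: "(\<And>i. i \<in> A \<Longrightarrow> yz_summable (g i)) \<Longrightarrow> yz_summable (sum g A)"
  by (induct A rule: infinite_finite_induct) (auto simp: yz_summable_0 yz_summable_add)

lemma yz_summable_iterate_diff:
  fixes T :: "int \<Rightarrow> 'a::field_char_0 trat \<Rightarrow> 'a trat"
  assumes T_1: "\<And>h. yz_summable (T 1 h - h)"
    and T_add: "\<And>i j h. T (i + j) h = T i (T j h)" and T_0: "\<And>h. T 0 h = h"
  shows "yz_summable (T p g - g)"
proof (induct p rule: int_induct[where k = 0])
  case base
  show ?case using yz_summable_0 by (simp add: T_0)
next
  case (step1 i)
  have "T (i + 1) g - g = (T 1 (T i g) - T i g) + (T i g - g)"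
    using T_add[of 1 i g] by (simp add: add.commute)
  then show ?case using yz_summable_add[OF T_1[of "T i g"] step1(2)] by simp
next
  case (step2 i)
  have "T (i - 1) g - g = (T i g - g) - (T 1 (T (i - 1) g) - T (i - 1) g)"
    using T_add[of 1 "i - 1" g] by simp
  then show ?case using yz_summable_diff[OF step2(2) T_1[of "T (i - 1) g"]] by simp
qed

lemma yz_summable_sigma_diff: "yz_summable (sigma 0 p q g - g)"
proof -
  have "sigma_y h - h = sigma_y h - h + sigma_z 0 - 0" "sigma_z h - h = sigma_y 0 - 0 + sigma_z h - h"
    for h :: "'a trat"
    by (simp_all add: ring_hom_zero[OF ring_hom_sigma] sigma_xyz)
  then have y1: "yz_summable (sigma 0 1 0 h - h)" and z1: "yz_summable (sigma 0 0 1 h - h)"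
    for h :: "'a trat"
    unfolding yz_summable_def sigma_xyz by blast+
  have y: "yz_summable (sigma 0 p 0 h - h)" for h :: "'a trat"
    by (rule yz_summable_iterate_diff[where T = "\<lambda>i. sigma 0 i 0"]) (simp_all add: y1)
  have z: "yz_summable (sigma 0 0 q h - h)" for h :: "'a trat"
    by (rule yz_summable_iterate_diff[where T = "\<lambda>i. sigma 0 0 i"]) (simp_all add: z1)
  have "sigma 0 p q g - g = (sigma 0 p 0 (sigma 0 0 q g) - sigma 0 0 q g) + (sigma 0 0 q g - g)"
    by simp
  then show ?thesis
    using yz_summable_add[OF y[of "sigma 0 0 q g"] z[of g]] by simp
qed

definition y_degree_le :: "nat \<Rightarrow> 'a::field_char_0 tpoly \<Rightarrow> bool" where
  "y_degree_le D X \<longleftrightarrow> (\<forall>s. degree (coeff X s) \<le> D)"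

lemma y_degree_le_exists: "\<exists>D. y_degree_le D X"
proof
  show "y_degree_le (\<Sum>s\<le>degree X. degree (coeff X s)) X"
    unfolding y_degree_le_def
  proof
    fix s
    show "degree (coeff X s) \<le> (\<Sum>s\<le>degree X. degree (coeff X s))"
      by (cases "s \<le> degree X") (auto intro: member_le_sum simp: coeff_eq_0)
  qed
qed

lemma y_degree_le_add: "y_degree_le D X \<Longrightarrow> y_degree_le D Y \<Longrightarrow> y_degree_le D (X + Y)"
  unfolding y_degree_le_def by (simp add: degree_add_le)

lemma y_degree_le_mult_linear_shift:
  assumes Y: "y_degree_le D Y"
  shows "y_degree_le D ([:of_int c, 1:] * Y)"
proof -
  have "degree (of_int c * coeff Y s) \<le> D" for s
    using degree_mult_le[of "of_int c :: 'a poly poly" "coeff Y s"] Y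
    by (simp add: y_degree_le_def degree_of_int) (metis le_trans)
  then have "y_degree_le D (smult (of_int c) Y)"
    by (simp add: y_degree_le_def)
  moreover have "y_degree_le D (pCons 0 Y)"
    using Y by (auto simp: y_degree_le_def coeff_pCons split: nat.splits)
  ultimately show ?thesis
    by (simp add: y_degree_le_add)
qed

lemma y_degree_le_shz: "y_degree_le D X \<Longrightarrow> y_degree_le D (shz c X)"
  unfolding shz_def
proof (induct X)
  case (pCons a p)
  then have "degree a \<le> D" and p: "y_degree_le D p"
    unfolding y_degree_le_def by (metis coeff_pCons_0, metis coeff_pCons_Suc)
  then have a: "y_degree_le D [:a:]"
    by (simp add: y_degree_le_def coeff_pCons split: nat.split)
  show ?case
    unfolding pcompose_pCons
    by (intro y_degree_le_add y_degree_le_mult_linear_shift a pCons.hyps(2) p)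
qed (simp add: y_degree_le_def)

lemma y_degree_le_shy: "y_degree_le D X \<Longrightarrow> y_degree_le D (shy b X)"
  by (simp add: y_degree_le_def shy_def coeff_map_poly degree_pcompose)

lemma y_degree_le_shx: "y_degree_le D X \<Longrightarrow> y_degree_le D (shx a X)"
  unfolding y_degree_le_def shx_def
  by (simp add: coeff_map_poly) (meson map_poly_degree_leq order_trans)

lemma y_degree_le_shxyz: "y_degree_le D X \<Longrightarrow> y_degree_le D (shxyz a b c X)"
  unfolding shxyz_def by (intro y_degree_le_shx y_degree_le_shy y_degree_le_shz)

lemma degree_shxyz_le: "degree (shxyz a b c X) \<le> degree X"
proof -
  have "degree (shx a Y) \<le> degree Y" "degree (shy b Y) \<le> degree Y" "degree (shz c Y) = degree Y"
    for Y :: "'a tpoly"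
    by (simp_all add: shx_def shy_def shz_def map_poly_degree_leq degree_pcompose)
  then show ?thesis
    unfolding shxyz_def by (metis order_trans)
qed

lemma homogeneous_system_nontrivial_solution:
  fixes v :: "'j \<Rightarrow> 'i \<Rightarrow> 'r::idom"
  assumes "finite I" "finite J" "card I < card J"
  shows "\<exists>a. (\<exists>j\<in>J. a j \<noteq> 0) \<and> (\<forall>i\<in>I. (\<Sum>j\<in>J. a j * v j i) = 0)"
  using assms
proof (induct I arbitrary: J v rule: finite_induct)
  case empty
  then obtain j where "j \<in> J" by fastforce
  then show ?case by (intro exI[of _ "\<lambda>_. 1"]) auto
next
  case (insert i0 I)
  show ?case
  proof (cases "\<forall>j\<in>J. v j i0 = 0")
    case True
    with insert show ?thesis by fastforce
  next
    case False
    then obtain j0 where j0: "j0 \<in> J" "v j0 i0 \<noteq> 0" by blast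
    define J' where "J' = J - {j0}"
    \<comment> \<open>Gaussian elimination of the unknown \<open>j0\<close> using the equation \<open>i0\<close>.\<close>
    define w where "w j i = v j0 i0 * v j i - v j i0 * v j0 i" for j i
    have "finite J'" "card I < card J'"
      using insert j0 by (auto simp: J'_def card_Diff_singleton)
    then obtain a' where a': "\<exists>j\<in>J'. a' j \<noteq> 0" "\<forall>i\<in>I. (\<Sum>j\<in>J'. a' j * w j i) = 0"
      using insert.hyps(3) by blast
    define a where
      "a j = (if j = j0 then - (\<Sum>k\<in>J'. a' k * v k i0) else v j0 i0 * a' j)" for j
    have reduce: "(\<Sum>j\<in>J. a j * v j i) = (\<Sum>j\<in>J'. a' j * w j i)" for i
    proof -
      have "(\<Sum>j\<in>J. a j * v j i) = a j0 * v j0 i + (\<Sum>j\<in>J'. a j * v j i)"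
        using insert.prems j0 by (simp add: J'_def sum.remove)
      also have "(\<Sum>j\<in>J'. a j * v j i) = (\<Sum>j\<in>J'. v j0 i0 * a' j * v j i)"
        by (rule sum.cong) (auto simp: a_def J'_def)
      finally show ?thesis
        by (simp add: a_def w_def algebra_simps sum_subtractf sum_distrib_left sum_distrib_right)
    qed
    show ?thesis
    proof (intro exI[of _ a] conjI)
      from a'(1) obtain j where "j \<in> J'" "a' j \<noteq> 0" by blast
      with j0 show "\<exists>j\<in>J. a j \<noteq> 0"
        by (intro bexI[of _ j]) (auto simp: a_def J'_def)
      show "\<forall>i\<in>insert i0 I. (\<Sum>j\<in>J. a j * v j i) = 0"
        using a'(2) by (auto simp: reduce w_def)
    qed
  qed
qed

lemma exists_Kx_linear_relation:
  fixes B :: "nat \<Rightarrow> 'a::field_char_0 tpoly"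
  assumes deg_z: "\<And>j. degree (B j) \<le> Dz" and deg_y: "\<And>j. y_degree_le Dy (B j)"
  defines "K \<equiv> Suc Dz * Suc Dy"
  shows "\<exists>A. (\<exists>j\<le>K. A j \<noteq> 0) \<and> (\<Sum>j\<le>K. embx (A j) * B j) = 0"
proof -
  define I where "I = {..Dz} \<times> {..Dy}"
  obtain A where A_nz: "\<exists>j\<in>{..K}. A j \<noteq> 0"
    and A_eqs: "\<forall>(s, t)\<in>I. (\<Sum>j\<le>K. A j * coeff (coeff (B j) s) t) = 0"
    using homogeneous_system_nontrivial_solution[of I "{..K}" "\<lambda>j (s, t). coeff (coeff (B j) s) t"]
    by (auto simp: I_def K_def)
  have "coeff (coeff (\<Sum>j\<le>K. embx (A j) * B j) s) t = 0" for s t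
  proof (cases "(s, t) \<in> I")
    case True
    then show ?thesis
      using A_eqs by (fastforce simp: coeff_sum embx_def)
  next
    case False
    then have "coeff (coeff (B j) s) t = 0" for j
      using deg_z[of j] deg_y[of j]
      by (auto simp: I_def y_degree_le_def coeff_eq_0 dest!: spec[of _ s])
    then show ?thesis
      by (simp add: coeff_sum embx_def)
  qed
  then have "(\<Sum>j\<le>K. embx (A j) * B j) = 0"
    by (intro poly_eqI) simp
  with A_nz show ?thesis by auto
qed

lemma Fract_embx_1_in_Kx: "Fract (embx a) 1 \<in> Kx"
  unfolding Kx_def by (intro CollectI exI[of _ a] exI[of _ 1]) (simp add: embx_def one_pCons)

lemma has_telescoper_from_multiples:
  assumes M: "M > 0" and A_Kx: "\<forall>j\<le>K. A j \<in> Kx" and A_nz: "\<exists>j\<le>K. A j \<noteq> 0"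
    and summable: "yz_summable (\<Sum>j\<le>K. A j * (sigma_x ^^ (j * M)) f)"
  shows "has_telescoper f"
proof -
  define l where "l i = (if M dvd i then A (i div M) else 0)" for i
  have multiple: "i \<in> (\<lambda>j. j * M) ` {..K}" if "i \<le> K * M" "M dvd i" for i
  proof
    show "i = i div M * M" using \<open>M dvd i\<close> by simp
    show "i div M \<in> {..K}" using div_le_mono[OF \<open>i \<le> K * M\<close>, of M] M by simp
  qed
  have "(\<Sum>i\<le>K * M. l i * (sigma_x ^^ i) f) = (\<Sum>i\<in>(\<lambda>j. j * M) ` {..K}. l i * (sigma_x ^^ i) f)"
    by (rule sum.mono_neutral_right) (auto simp: l_def dest: multiple)
  also have "\<dots> = (\<Sum>j\<le>K. A j * (sigma_x ^^ (j * M)) f)"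
    using M by (subst sum.reindex) (auto simp: inj_on_def l_def)
  finally have "yz_summable (\<Sum>i\<le>K * M. l i * (sigma_x ^^ i) f)"
    using summable by simp
  moreover have "\<forall>i\<le>K * M. l i \<in> Kx"
    using A_Kx Fract_embx_1_in_Kx[of 0]
    by (auto simp: l_def embx_def Zero_fract_def[symmetric] div_le_mono[of _ "K * M" M, simplified M])
  moreover have "\<exists>i\<le>K * M. l i \<noteq> 0"
  proof -
    from A_nz obtain j where "j \<le> K" "A j \<noteq> 0" by blast
    with M show ?thesis by (intro exI[of _ "j * M"]) (simp add: l_def)
  qed
  ultimately show ?thesis
    unfolding has_telescoper_def by blast
qed

lemma ring_hom_Fract_1: "is_ring_hom (\<lambda>X::'a::idom. Fract X 1)"
  by (simp add: is_ring_hom_def One_fract_def)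

lemma sum_Fract_same_denom:
  assumes "(\<Sum>j\<in>J. E j) = 0"
  shows "(\<Sum>j\<in>J. Fract (E j) D) = 0"
proof -
  have "(\<Sum>j\<in>J. Fract (E j) D) = (\<Sum>j\<in>J. Fract (E j) 1) * Fract 1 D"
    by (simp add: sum_distrib_right)
  also have "(\<Sum>j\<in>J. Fract (E j) 1) = Fract (\<Sum>j\<in>J. E j) 1"
    by (simp add: ring_hom_sum[OF ring_hom_Fract_1])
  finally show ?thesis
    using assms by (simp add: Zero_fract_def[symmetric])
qed

lemma has_telescoper_of_periodic_denominator:
  fixes b D :: "'a::field_char_0 tpoly"
  assumes M: "M > 0" and D_periodic: "shift_invariant (int M) P Q D" and D_nz: "D \<noteq> 0"
  shows "has_telescoper (Fract b D)"
proof -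
  define B where "B j = shxyz (int j * int M) (int j * P) (int j * Q) b" for j
  have shift_x: "(sigma_x ^^ (j * M)) (Fract b D)
      = sigma 0 (- (int j * P)) (- (int j * Q)) (Fract (B j) D)" for j
  proof -
    have "shxyz (int j * int M) (int j * P) (int j * Q) D = D"
      using shift_invariant_int_mult[OF D_periodic, of "int j"] by (simp add: shift_invariant_def)
    from arg_cong[OF this, of "shxyz 0 (- (int j * P)) (- (int j * Q))"]
    have "shxyz (int j * int M) 0 0 D = shxyz 0 (- (int j * P)) (- (int j * Q)) D"
      by simp
    then show ?thesis
      using D_nz by (simp add: sigma_x_pow sigma_Fract B_def)
  qed
  obtain Dy where "y_degree_le Dy b"
    using y_degree_le_exists by blast
  then have "y_degree_le Dy (B j)" "degree (B j) \<le> degree b" for j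
    by (simp_all add: B_def y_degree_le_shxyz degree_shxyz_le)
  then obtain K A where A_nz: "\<exists>j\<le>K. A j \<noteq> 0"
    and relation: "(\<Sum>j\<le>K. embx (A j) * B j) = 0"
    using exists_Kx_linear_relation[of B "degree b" Dy] by blast
  define l where "l j = Fract (embx (A j)) 1" for j
  have "yz_summable (l j * (sigma_x ^^ (j * M)) (Fract b D) - Fract (embx (A j) * B j) D)" for j
  proof -
    have "sigma 0 p q (Fract (embx (A j) * B j) D) = l j * sigma 0 p q (Fract (B j) D)" for p q
      using D_nz by (simp add: l_def sigma_Fract ring_hom_mult[OF ring_hom_shxyz] shxyz_embx)
    then show ?thesis
      using yz_summable_sigma_diff[of "- (int j * P)" "- (int j * Q)" "Fract (embx (A j) * B j) D"]
      by (simp add: shift_x)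
  qed
  then have "yz_summable (\<Sum>j\<le>K. l j * (sigma_x ^^ (j * M)) (Fract b D) - Fract (embx (A j) * B j) D)"
    by (intro yz_summable_sum)
  then have "yz_summable (\<Sum>j\<le>K. l j * (sigma_x ^^ (j * M)) (Fract b D))"
    by (simp add: sum_subtractf sum_Fract_same_denom[OF relation])
  moreover have "\<exists>j\<le>K. l j \<noteq> 0"
    using A_nz by (simp add: l_def eq_fract Zero_fract_def embx_def)
  ultimately show ?thesis
    by (intro has_telescoper_from_multiples[OF M]) (auto simp: l_def Fract_embx_1_in_Kx)
qed

lemma common_period_of_independent_periods:
  assumes m: "0 < m" and d_m: "shift_invariant (int m) p q d"
    and n1: "0 < n1" and d_y: "shift_invariant 0 n1 k1 d"
    and n2: "0 < n2" and c_x: "shift_invariant n2 k2 0 (embxy c)"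
  shows "\<exists>M P Q. 0 < M \<and> shift_invariant (int M) P Q (embxy c) \<and> shift_invariant (int M) P Q d"
proof -
  define M where "M = int m * n1 * n2"
  \<comment> \<open>\<open>j\<close> makes the \<open>y\<close>-components of the combined periods of \<open>d\<close> and \<open>c\<close> agree.\<close>
  define j where "j = int m * k2 - n2 * p"
  define Q where "Q = n1 * n2 * q + j * k1"
  have "shift_invariant (n1 * n2 * int m + j * 0) (n1 * n2 * p + j * n1) (n1 * n2 * q + j * k1) d"
    by (intro shift_invariant_add shift_invariant_int_mult d_m d_y)
  then have d_M: "shift_invariant M (int m * n1 * k2) Q d"
    by (simp add: M_def Q_def j_def algebra_simps)
  have "shift_invariant (int m * n1 * n2 + 0) (int m * n1 * k2 + 0) (int m * n1 * 0 + Q) (embxy c)"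
    by (intro shift_invariant_add shift_invariant_int_mult c_x shift_invariant_embxy)
  then have c_M: "shift_invariant M (int m * n1 * k2) Q (embxy c)"
    by (simp add: M_def)
  have "0 < M"
    using m n1 n2 by (simp add: M_def)
  with c_M d_M show ?thesis
    by (intro exI[of _ "nat M"]) auto
qed

lemma common_period_of_multiple:
  assumes "shift_invariant (int m) p q d" and "shift_invariant (int t * int m) (int t * p) 0 (embxy c)"
  shows "shift_invariant (int (t * m)) (int t * p) (int t * q) (embxy c)"
    and "shift_invariant (int (t * m)) (int t * p) (int t * q) d"
  using shift_invariant_add[OF assms(2) shift_invariant_embxy[of "int t * q"]]
    shift_invariant_int_mult[OF assms(1), of "int t"]
  by simp_all

theorem lemma6p2:
  fixes b d :: "'a::field_char_0 tpoly" and c :: "'a poly poly"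
    and f :: "'a trat" and lam m :: nat and n k :: int
  assumes lam_pos: "lam > 0"
    and c_nz: "c \<noteq> 0"
    and f_def: "f = Fract b (embxy c * d ^ lam)"
    and d_irr: "irreducible d"
    and prim: "prim_yz b" "prim_yz (embxy c)" "prim_yz d"
    and deg: "degree b < degree d"
    and m_pos: "m > 0"
    and m_eq: "shx (int m) d = shy n (shz k d)"
    and m_min: "\<forall>m'::nat. 0 < m' \<and> m' < m \<longrightarrow>
                  \<not> (\<exists>n' k'::int. shx (int m') d = shy n' (shz k' d))"
    and cases: "(\<exists>n1 n2 k1 k2 :: int. n1 > 0 \<and> n2 > 0 \<and>
                    shy n1 d = shz k1 d \<and> shx n2 (embxy c) = shy k2 (embxy c))
              \<or> (\<exists>t::nat. t > 0 \<and> shx (int t * int m) (embxy c) = shy (int t * n) (embxy c))"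
  shows "has_telescoper f"
proof -
  have d_m: "shift_invariant (int m) (- n) (- k) d"
    using shift_invariant_of_eq[of "int m" 0 0 d 0 n k] m_eq by (simp add: shxyz_def)
  obtain M P Q where "0 < M" "shift_invariant (int M) P Q (embxy c)" "shift_invariant (int M) P Q d"
    using cases
  proof (elim disjE exE conjE)
    fix n1 n2 k1 k2 :: int
    assume "0 < n1" "0 < n2" "shy n1 d = shz k1 d" "shx n2 (embxy c) = shy k2 (embxy c)"
    then show thesis
      using that common_period_of_independent_periods[OF m_pos d_m, of n1 "- k1" n2 "- k2" c]
        shift_invariant_of_eq[of 0 n1 0 d 0 0 k1] shift_invariant_of_eq[of n2 0 0 "embxy c" 0 k2 0]
      by (auto simp: shxyz_def)
  next
    fix t :: nat
    assume "0 < t" "shx (int t * int m) (embxy c) = shy (int t * n) (embxy c)"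
    then show thesis
      using that[of "t * m"] common_period_of_multiple[OF d_m, of t c] m_pos
        shift_invariant_of_eq[of "int t * int m" 0 0 "embxy c" 0 "int t * n" 0]
      by (auto simp: shxyz_def)
  qed
  moreover have "embxy c * d ^ lam \<noteq> 0"
    using c_nz d_irr by (auto simp: embxy_def)
  ultimately show ?thesis
    unfolding f_def
    by (intro has_telescoper_of_periodic_denominator shift_invariant_mult shift_invariant_power)
qed

end
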